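(* Let $W$ be a stopping time in $\mathcal{T}$ and let $0<\rho<1$. Then $W_{\mathcal{T}}^{\rho}\subset\widehat{W_{\mathcal{T}}^{\rho}}$ as open subsets of the circle, that is, $S_{\mathcal{T}}(W_{\mathcal{T}}^{\rho})\subset S_{\mathcal{T}}(\widehat{W_{\mathcal{T}}^{\rho}})$. Consequently $Cap_{\mathcal{T}}W_{\mathcal{T}}^{\rho}\le\rho^{-2}Cap_{\mathcal{T}}W$.
   Context: Tree. $\mathcal{T}$ is the rooted dyadic tree whose vertices are the dyadic arcs of the unit circle. The root $o$ is the whole circle. The vertices at level $n\ge0$ are the arcs $\{e^{it}:2\pi j2^{-n}\le t<2\pi(j+1)2^{-n}\}$ for $0\le j<2^n$. Each vertex has two children, which are the two arcs at the next level contained in it. $I(x)$ denotes the arc of the vertex $x$. Write $y\le x$ if $x$ lies in the subtree rooted at $y$ (equivalently $I(x)\subset I(y)$), and $y<x$ if moreover $y\ne x$. $[o,x]=\{y:y\le x\}$. $d(x)$ is the number of vertices in $[o,x]$, so $d(o)=1$. A stopping time is a set of pairwise incomparable vertices. $\mathcal{G}(\{o\},W)$ is the union of $[o,w]$, $w\in W$. The shadow of a stopping time $W$ is $S_{\mathcal{T}}(W)=\bigcup_{x\in W}I(x)$. Capacity. For $f:\mathcal{T}\to\mathbb{R}$ put $If(x)=\sum_{y\in[o,x]}f(y)$, and define $Cap_{\mathcal{T}}(W)=\inf\{\|f\|^2_{\ell^2}:If\ge1\text{ on }W\}$. Stopping time blowup. For $0\le\rho\le1$ and $\kappa\in\mathcal{T}$,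 $R^\rho\kappa$ is the unique vertex with $o\le R^\rho\kappa\le\kappa$ and $\rho d(\kappa)\le d(R^\rho\kappa)<\rho d(\kappa)+1$. $W^\rho_{\mathcal{T}}$ is the set of minimal elements of $\{R^\rho\kappa:\kappa\in W\}$. Capacitary blowup. Let $h$ be the unique minimizer of $Cap_{\mathcal{T}}(W)$ and $H=Ih$, so $H=1$ on $W$ and $\|h\|^2=Cap_{\mathcal{T}}W$. Then $\widehat{W^\rho_{\mathcal{T}}}=\{t\in\mathcal{G}(\{o\},W):H(t)\ge\rho\text{ and }H(x)\le\rho\text{ for all }x<t\}$. *)

theory Defs
  imports "HOL-Analysis.Analysis"
begin

text \<open>Vertices of the dyadic tree: pairs (n, j) with j < 2^n, standing for the
  dyadic arc of level n with index j.  The root o is (0, 0).\<close>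

type_synonym vertex = "nat \<times> nat"

definition dyadic_tree :: "vertex set" where
  "dyadic_tree = {(n, j). j < 2 ^ n}"

definition root :: vertex where
  "root = (0, 0)"

definition arc :: "vertex \<Rightarrow> complex set" where
  "arc x = (case x of (n, j) \<Rightarrow>
     {exp (\<i> * complex_of_real t) | t. 2 * pi * real j / 2 ^ n \<le> t \<and> t < 2 * pi * (real j + 1) / 2 ^ n})"

text \<open>tree_le y x: x lies in the subtree rooted at y (y \<le> x).\<close>
definition tree_le :: "vertex \<Rightarrow> vertex \<Rightarrow> bool" where
  "tree_le y x = (case y of (m, i) \<Rightarrow> case x of (n, j) \<Rightarrow> m \<le> n \<and> j div 2 ^ (n - m) = i)"

definition tree_less :: "vertex \<Rightarrow> vertex \<Rightarrow> bool" where
  "tree_less y x = (tree_le y x \<and> y \<noteq> x)"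

definition depth :: "vertex \<Rightarrow> nat" where
  "depth x = card {y \<in> dyadic_tree. tree_le y x}"

definition stopping_time :: "vertex set \<Rightarrow> bool" where
  "stopping_time W = (W \<subseteq> dyadic_tree \<and>
     (\<forall>x\<in>W. \<forall>y\<in>W. tree_le x y \<longrightarrow> x = y))"

definition shadow :: "vertex set \<Rightarrow> complex set" where
  "shadow W = (\<Union>x\<in>W. arc x)"

definition geodesic_union :: "vertex set \<Rightarrow> vertex set" where
  "geodesic_union W = {t \<in> dyadic_tree. \<exists>w\<in>W. tree_le t w}"

definition potential :: "(vertex \<Rightarrow> real) \<Rightarrow> vertex \<Rightarrow> real" where
  "potential f x = (\<Sum>y\<in>{y \<in> dyadic_tree. tree_le y x}. f y)"

definition l2_sq :: "(vertex \<Rightarrow> real) \<Rightarrow> real" where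
  "l2_sq f = infsum (\<lambda>x. (f x)\<^sup>2) dyadic_tree"

definition admissible :: "vertex set \<Rightarrow> (vertex \<Rightarrow> real) \<Rightarrow> bool" where
  "admissible W f = ((\<forall>x. x \<notin> dyadic_tree \<longrightarrow> f x = 0) \<and>
     (\<lambda>x. (f x)\<^sup>2) summable_on dyadic_tree \<and> (\<forall>w\<in>W. potential f w \<ge> 1))"

definition capacity :: "vertex set \<Rightarrow> real" where
  "capacity W = Inf {l2_sq f | f. admissible W f}"

text \<open>The unique minimizer h of the capacity (functions are taken to vanish
  off the tree, so that the minimizer is unique as a function).\<close>
definition cap_minimizer :: "vertex set \<Rightarrow> vertex \<Rightarrow> real" where
  "cap_minimizer W = (THE h. admissible W h \<and> l2_sq h = capacity W)"

definition Rrho :: "real \<Rightarrow> vertex \<Rightarrow> vertex" where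
  "Rrho \<rho> \<kappa> = (THE y. y \<in> dyadic_tree \<and> tree_le root y \<and> tree_le y \<kappa> \<and>
      \<rho> * real (depth \<kappa>) \<le> real (depth y) \<and> real (depth y) < \<rho> * real (depth \<kappa>) + 1)"

definition minimal_elements :: "vertex set \<Rightarrow> vertex set" where
  "minimal_elements A = {y \<in> A. \<not> (\<exists>z\<in>A. tree_less z y)}"

definition blowup :: "real \<Rightarrow> vertex set \<Rightarrow> vertex set" where
  "blowup \<rho> W = minimal_elements (Rrho \<rho> ` W)"

definition cap_blowup :: "real \<Rightarrow> vertex set \<Rightarrow> vertex set" where
  "cap_blowup \<rho> W = (let H = potential (cap_minimizer W) in
     {t \<in> geodesic_union W. H t \<ge> \<rho> \<and> (\<forall>x. tree_less x t \<longrightarrow> H x \<le> \<rho>)})"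

end

theory Submission
  imports Defs
begin

text \<open>The capacitary minimizer h is nonnegative, and a first-variation argument (moving mass
  from two siblings to their parent keeps every potential on W at least 1) shows that h is
  nonincreasing along each geodesic [o,\<kappa>]. Averages of a nonincreasing sequence over initial
  segments decrease, so H(R^\<rho> \<kappa>) \<ge> \<rho> H(\<kappa>) \<ge> \<rho>. The first vertex of [o, R^\<rho> \<kappa>] where H
  reaches \<rho> lies in the capacitary blowup, which gives the inclusion of shadows, and h/\<rho> is
  admissible for the blowup, which gives the capacity bound.\<close>

section \<open>Ancestors in the dyadic tree\<close>

text \<open>For m \<le> fst x this is the vertex of level m on the geodesic [o,x]; for larger m it is junk.\<close>

definition ancestor :: "vertex \<Rightarrow> nat \<Rightarrow> vertex" where
  "ancestor x m = (m, snd x div 2 ^ (fst x - m))"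

lemma fst_ancestor [simp]: "fst (ancestor x m) = m"
  by (simp add: ancestor_def)

lemma ancestor_self [simp]: "ancestor x (fst x) = x"
  by (cases x) (simp add: ancestor_def)

lemma inj_ancestor: "inj (ancestor x)"
  by (metis fst_ancestor injI)

lemma tree_le_iff_ancestor: "tree_le y x \<longleftrightarrow> fst y \<le> fst x \<and> y = ancestor x (fst y)"
  by (cases x; cases y) (auto simp: tree_le_def ancestor_def)

lemma ancestor_ancestor:
  assumes "m \<le> k" "k \<le> fst x"
  shows "ancestor (ancestor x k) m = ancestor x m"
proof -
  have "(2::nat) ^ (fst x - m) = 2 ^ (fst x - k) * 2 ^ (k - m)"
    using assms by (simp flip: power_add)
  then show ?thesis by (simp add: ancestor_def div_mult2_eq)
qed

lemma tree_le_ancestor: "m \<le> fst x \<Longrightarrow> tree_le (ancestor x m) x"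
  by (simp add: tree_le_iff_ancestor)

lemma tree_le_trans: "tree_le x y \<Longrightarrow> tree_le y z \<Longrightarrow> tree_le x z"
  unfolding tree_le_iff_ancestor by (metis ancestor_ancestor le_trans)

lemma tree_le_same_level: "tree_le y x \<Longrightarrow> tree_le z x \<Longrightarrow> fst y = fst z \<Longrightarrow> y = z"
  by (metis tree_le_iff_ancestor)

lemma ancestor_in_tree:
  assumes "x \<in> dyadic_tree" "m \<le> fst x"
  shows "ancestor x m \<in> dyadic_tree"
proof -
  have "snd x < 2 ^ m * 2 ^ (fst x - m)"
    using assms by (cases x) (simp add: dyadic_tree_def flip: power_add)
  then show ?thesis by (simp add: ancestor_def dyadic_tree_def less_mult_imp_div_less)
qed

lemma root_tree_le: "x \<in> dyadic_tree \<Longrightarrow> tree_le root x"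
  by (cases x) (simp add: root_def tree_le_def dyadic_tree_def)

lemma ancestors_subset: "{y \<in> dyadic_tree. tree_le y x} \<subseteq> ancestor x ` {..fst x}"
  by (auto simp: tree_le_iff_ancestor)

lemma finite_ancestors: "finite {y \<in> dyadic_tree. tree_le y x}"
  using finite_subset[OF ancestors_subset] by blast

lemma ancestors_eq:
  "x \<in> dyadic_tree \<Longrightarrow> {y \<in> dyadic_tree. tree_le y x} = ancestor x ` {..fst x}"
proof
  show "{y \<in> dyadic_tree. tree_le y x} \<subseteq> ancestor x ` {..fst x}" by (rule ancestors_subset)
qed (auto simp: ancestor_in_tree tree_le_ancestor)

lemma depth_eq: "x \<in> dyadic_tree \<Longrightarrow> depth x = fst x + 1"
  by (simp add: depth_def ancestors_eq card_image inj_on_subset[OF inj_ancestor])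

lemma potential_eq_sum_ancestors:
  "x \<in> dyadic_tree \<Longrightarrow> potential f x = (\<Sum>m\<le>fst x. f (ancestor x m))"
  by (simp add: potential_def ancestors_eq sum.reindex inj_on_subset[OF inj_ancestor])

lemma potential_ancestor:
  assumes "x \<in> dyadic_tree" "k \<le> fst x"
  shows "potential f (ancestor x k) = (\<Sum>m\<le>k. f (ancestor x m))"
  using assms by (simp add: potential_eq_sum_ancestors ancestor_in_tree ancestor_ancestor)

lemma potential_add: "potential (\<lambda>x. f x + g x) w = potential f w + potential g w"
  by (simp add: potential_def sum.distrib)

lemma potential_cmult: "potential (\<lambda>x. c * f x) w = c * potential f w"
  by (simp add: potential_def sum_distrib_left)

lemma potential_divide: "potential (\<lambda>x. f x / c) w = potential f w / c"
  by (simp add: potential_def sum_divide_distrib)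

lemma Rrho_eq_ancestor:
  assumes \<kappa>: "\<kappa> \<in> dyadic_tree" and \<rho>: "0 < \<rho>" "\<rho> \<le> 1"
  defines "k \<equiv> nat \<lceil>\<rho> * real (fst \<kappa> + 1)\<rceil> - 1"
  shows "Rrho \<rho> \<kappa> = ancestor \<kappa> k" and "k \<le> fst \<kappa>" and "\<rho> * real (fst \<kappa> + 1) \<le> real (k + 1)"
proof -
  let ?c = "\<lceil>\<rho> * real (fst \<kappa> + 1)\<rceil>"
  have "1 \<le> ?c" using \<rho> by (simp add: one_le_ceiling)
  moreover have "\<rho> * real (fst \<kappa> + 1) \<le> real (fst \<kappa> + 1)"
    using \<rho> by (intro mult_left_le_one_le) auto
  then have "?c \<le> int (fst \<kappa> + 1)" by (metis ceiling_le_iff of_int_of_nat_eq)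
  ultimately have c: "int (k + 1) = ?c" and kn: "k \<le> fst \<kappa>" unfolding k_def by linarith+
  have k_real: "real (k + 1) = of_int ?c" using c by (metis of_int_of_nat_eq)
  show "k \<le> fst \<kappa>" by (rule kn)
  show lower: "\<rho> * real (fst \<kappa> + 1) \<le> real (k + 1)"
    unfolding k_real by (rule le_of_int_ceiling)
  show "Rrho \<rho> \<kappa> = ancestor \<kappa> k"
    unfolding Rrho_def
  proof (rule the_equality)
    have "ancestor \<kappa> k \<in> dyadic_tree" using \<kappa> kn by (rule ancestor_in_tree)
    moreover have "real (k + 1) < \<rho> * real (fst \<kappa> + 1) + 1"
      unfolding k_real by linarith
    ultimately show "ancestor \<kappa> k \<in> dyadic_tree \<and> tree_le root (ancestor \<kappa> k) \<and> tree_le (ancestor \<kappa> k) \<kappa> \<and>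
        \<rho> * real (depth \<kappa>) \<le> real (depth (ancestor \<kappa> k)) \<and>
        real (depth (ancestor \<kappa> k)) < \<rho> * real (depth \<kappa>) + 1"
      using \<kappa> kn lower by (simp add: depth_eq root_tree_le tree_le_ancestor)
  next
    fix y assume y: "y \<in> dyadic_tree \<and> tree_le root y \<and> tree_le y \<kappa> \<and>
        \<rho> * real (depth \<kappa>) \<le> real (depth y) \<and> real (depth y) < \<rho> * real (depth \<kappa>) + 1"
    then have "\<lceil>\<rho> * real (fst \<kappa> + 1)\<rceil> = int (fst y + 1)"
      using \<kappa> by (intro ceiling_unique) (auto simp: depth_eq)
    then have "fst y = k" using c by simp
    then show "y = ancestor \<kappa> k" using y by (metis tree_le_iff_ancestor)
  qed
qed

section \<open>Arcs and shadows\<close>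

lemma arc_antimono:
  assumes "tree_le t y"
  shows "arc y \<subseteq> arc t"
proof -
  obtain n j where y: "y = (n, j)" by fastforce
  define m where "m = fst t"
  define q :: nat where "q = 2 ^ (n - m)"
  have t: "t = (m, j div q)" and "m \<le> n"
    using assms unfolding m_def q_def y by (auto simp: tree_le_iff_ancestor ancestor_def)
  have pow: "(2::real) ^ n = 2 ^ m * real q"
    using \<open>m \<le> n\<close> by (simp add: q_def flip: power_add)
  have q: "0 < q" by (simp add: q_def)
  have lo: "real (j div q) * real q \<le> real j"
    and hi: "real j + 1 \<le> (real (j div q) + 1) * real q"
  proof -
    have "j div q * q \<le> j" "j + 1 \<le> (j div q + 1) * q"
      using div_times_less_eq_dividend[of j q] dividend_less_div_times[OF q, of j] by simp_all
    then have "real (j div q * q) \<le> real j" "real (j + 1) \<le> real ((j div q + 1) * q)"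
      by (simp_all only: of_nat_le_iff)
    then show "real (j div q) * real q \<le> real j" "real j + 1 \<le> (real (j div q) + 1) * real q"
      by (simp_all add: algebra_simps)
  qed
  have "real (j div q) / 2 ^ m \<le> real j / 2 ^ n"
    using lo q unfolding pow by (simp add: field_simps)
  then have lower: "2 * pi * real (j div q) / 2 ^ m \<le> 2 * pi * real j / 2 ^ n"
    by (simp add: mult_left_mono flip: times_divide_eq_right)
  have "(real j + 1) / 2 ^ n \<le> (real (j div q) + 1) * real q / 2 ^ n"
    using hi by (simp add: divide_right_mono)
  then have "(real j + 1) / 2 ^ n \<le> (real (j div q) + 1) / 2 ^ m"
    using q unfolding pow by simp
  then have upper: "2 * pi * (real j + 1) / 2 ^ n \<le> 2 * pi * (real (j div q) + 1) / 2 ^ m"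
    by (simp add: mult_left_mono flip: times_divide_eq_right)
  show ?thesis
  proof
    fix z assume "z \<in> arc y"
    then obtain u where "z = exp (\<i> * complex_of_real u)"
      and "2 * pi * real j / 2 ^ n \<le> u" "u < 2 * pi * (real j + 1) / 2 ^ n"
      unfolding arc_def y by auto
    with lower upper show "z \<in> arc t"
      unfolding arc_def t by auto
  qed
qed

lemma shadow_mono_tree_le:
  assumes "\<And>y. y \<in> A \<Longrightarrow> \<exists>t\<in>B. tree_le t y"
  shows "shadow A \<subseteq> shadow B"
  using assms arc_antimono unfolding shadow_def by blast

lemma square_half_sum_le: "((a + b) / 2)\<^sup>2 \<le> a\<^sup>2 + (b::real)\<^sup>2"
  and square_half_diff_le: "((a - b) / 2)\<^sup>2 \<le> a\<^sup>2 + (b::real)\<^sup>2"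
proof -
  have "0 \<le> (a - b)\<^sup>2" "0 \<le> (a + b)\<^sup>2" by simp_all
  then show "((a + b) / 2)\<^sup>2 \<le> a\<^sup>2 + b\<^sup>2" "((a - b) / 2)\<^sup>2 \<le> a\<^sup>2 + b\<^sup>2"
    by (simp_all add: power2_eq_square field_simps)
qed

lemma nonneg_if_quadratic_nonneg:
  fixes a b :: real
  assumes "\<And>d. 0 < d \<Longrightarrow> 0 \<le> d * a + d\<^sup>2 * b"
  shows "0 \<le> a"
proof (rule ccontr)
  assume "\<not> 0 \<le> a"
  define d where "d = - a / (\<bar>b\<bar> + 1)"
  have d: "0 < d" "d * \<bar>b\<bar> < - a"
    using \<open>\<not> 0 \<le> a\<close> by (auto simp: d_def field_simps)
  have "d * a + d\<^sup>2 * b \<le> d * (a + d * \<bar>b\<bar>)"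
    using d by (simp add: power2_eq_square algebra_simps mult_left_mono)
  also have "\<dots> < 0"
    using d by (simp add: mult_pos_neg)
  finally show False using assms[OF d(1)] by simp
qed

lemma antitone_prefix_mean_ge:
  fixes s :: "nat \<Rightarrow> real"
  assumes antitone: "\<And>a b. a \<le> b \<Longrightarrow> b \<le> n \<Longrightarrow> s b \<le> s a" and "k \<le> n"
  shows "real (k + 1) * (\<Sum>m\<le>n. s m) \<le> real (n + 1) * (\<Sum>m\<le>k. s m)"
proof -
  have split: "(\<Sum>m\<le>n. s m) = (\<Sum>m\<le>k. s m) + (\<Sum>m\<in>{k<..n}. s m)"
    using \<open>k \<le> n\<close> by (subst sum.union_disjoint[symmetric]) (auto intro!: sum.cong)
  have head: "real (k + 1) * s k \<le> (\<Sum>m\<le>k. s m)"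
    using sum_mono[of "{..k}" "\<lambda>_. s k" s] antitone \<open>k \<le> n\<close> by simp
  have tail: "(\<Sum>m\<in>{k<..n}. s m) \<le> real (n - k) * s k"
    using sum_mono[of "{k<..n}" s "\<lambda>_. s k"] antitone by simp
  have "real (k + 1) * (\<Sum>m\<le>n. s m) \<le> real (k + 1) * (\<Sum>m\<le>k. s m) + real (n - k) * (real (k + 1) * s k)"
    unfolding split using tail by (simp add: distrib_left mult.left_commute mult_left_mono)
  also have "\<dots> \<le> real (k + 1) * (\<Sum>m\<le>k. s m) + real (n - k) * (\<Sum>m\<le>k. s m)"
    using head by (simp add: mult_left_mono)
  also have "\<dots> = real (n + 1) * (\<Sum>m\<le>k. s m)"
    using \<open>k \<le> n\<close> by (simp add: algebra_simps of_nat_diff)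
  finally show ?thesis .
qed

section \<open>Square-summable functions\<close>

lemma summable_on_square_half_sum:
  fixes f g :: "'a \<Rightarrow> real"
  assumes f: "(\<lambda>x. (f x)\<^sup>2) summable_on A" and g: "(\<lambda>x. (g x)\<^sup>2) summable_on A"
  shows "(\<lambda>x. ((f x + g x) / 2)\<^sup>2) summable_on A"
    and "(\<lambda>x. ((f x - g x) / 2)\<^sup>2) summable_on A"
  using summable_on_add[OF f g]
  by (auto intro: summable_on_comparison_test square_half_sum_le square_half_diff_le)

lemma infsum_square_parallelogram:
  fixes f g :: "'a \<Rightarrow> real"
  assumes f: "(\<lambda>x. (f x)\<^sup>2) summable_on A" and g: "(\<lambda>x. (g x)\<^sup>2) summable_on A"
  shows "infsum (\<lambda>x. ((f x + g x) / 2)\<^sup>2) A =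
     (infsum (\<lambda>x. (f x)\<^sup>2) A + infsum (\<lambda>x. (g x)\<^sup>2) A) / 2 - infsum (\<lambda>x. ((f x - g x) / 2)\<^sup>2) A"
proof -
  have sum: "(\<lambda>x. (f x)\<^sup>2 + (g x)\<^sup>2) summable_on A"
    using f g by (rule summable_on_add)
  have "infsum (\<lambda>x. ((f x + g x) / 2)\<^sup>2) A =
      infsum (\<lambda>x. ((f x)\<^sup>2 + (g x)\<^sup>2) * (1 / 2) + - ((f x - g x) / 2)\<^sup>2) A"
    by (rule infsum_cong) (simp add: power2_eq_square field_simps)
  also have "\<dots> = infsum (\<lambda>x. ((f x)\<^sup>2 + (g x)\<^sup>2) * (1 / 2)) A + infsum (\<lambda>x. - ((f x - g x) / 2)\<^sup>2) A"
    using summable_on_cmult_left[OF sum] summable_on_square_half_sum(2)[OF f g]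
    by (intro infsum_add) (simp_all only: summable_on_uminus)
  finally show ?thesis
    unfolding infsum_cmult_left[OF sum] infsum_add[OF f g] infsum_uminus by simp
qed

lemma infsum_square_add_finite_support:
  fixes f e :: "'a \<Rightarrow> real"
  assumes f: "(\<lambda>x. (f x)\<^sup>2) summable_on A" and S: "finite S" "S \<subseteq> A"
    and e: "\<And>x. x \<notin> S \<Longrightarrow> e x = 0"
  shows "(\<lambda>x. (f x + e x)\<^sup>2) summable_on A"
    and "infsum (\<lambda>x. (f x + e x)\<^sup>2) A = infsum (\<lambda>x. (f x)\<^sup>2) A + (\<Sum>x\<in>S. 2 * f x * e x + (e x)\<^sup>2)"
proof -
  define k where "k x = 2 * f x * e x + (e x)\<^sup>2" for x
  have square: "(\<lambda>x. (f x + e x)\<^sup>2) = (\<lambda>x. (f x)\<^sup>2 + k x)"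
    by (simp add: k_def power2_eq_square algebra_simps)
  have k_support: "x \<notin> S \<Longrightarrow> k x = 0" for x
    by (simp add: k_def e)
  have k: "k summable_on A" "infsum k A = (\<Sum>x\<in>S. k x)"
    using summable_on_cong_neutral[of S A k k] infsum_cong_neutral[of S A k k] S k_support
    by auto
  show "(\<lambda>x. (f x + e x)\<^sup>2) summable_on A"
    unfolding square using f k(1) by (rule summable_on_add)
  show "infsum (\<lambda>x. (f x + e x)\<^sup>2) A = infsum (\<lambda>x. (f x)\<^sup>2) A + (\<Sum>x\<in>S. 2 * f x * e x + (e x)\<^sup>2)"
    unfolding square infsum_add[OF f k(1)] k(2) by (simp add: k_def)
qed

lemma infsum_square_le_pointwise_limit:
  fixes f :: "nat \<Rightarrow> 'a \<Rightarrow> real"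
  assumes f: "\<And>n. (\<lambda>x. (f n x)\<^sup>2) summable_on A"
    and lim: "\<And>x. x \<in> A \<Longrightarrow> (\<lambda>n. f n x) \<longlonglongrightarrow> g x"
    and bound: "\<And>n. infsum (\<lambda>x. (f n x)\<^sup>2) A \<le> b n" and b: "b \<longlonglongrightarrow> c"
  shows "(\<lambda>x. (g x)\<^sup>2) summable_on A" and "infsum (\<lambda>x. (g x)\<^sup>2) A \<le> c"
proof -
  have finite_sums: "(\<Sum>x\<in>F. (g x)\<^sup>2) \<le> c" if F: "finite F" "F \<subseteq> A" for F
  proof (rule LIMSEQ_le[OF _ b])
    show "(\<lambda>n. \<Sum>x\<in>F. (f n x)\<^sup>2) \<longlonglongrightarrow> (\<Sum>x\<in>F. (g x)\<^sup>2)"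
      using F lim by (auto intro!: tendsto_sum tendsto_power)
    show "\<exists>N. \<forall>n\<ge>N. (\<Sum>x\<in>F. (f n x)\<^sup>2) \<le> b n"
      using finite_sum_le_infsum[OF f F] bound by (auto intro: order_trans)
  qed
  show summable: "(\<lambda>x. (g x)\<^sup>2) summable_on A"
    by (rule nonneg_bdd_above_summable_on) (auto intro!: bdd_aboveI[where M = c] finite_sums)
  show "infsum (\<lambda>x. (g x)\<^sup>2) A \<le> c"
    by (rule infsum_le_finite_sums[OF summable finite_sums])
qed

section \<open>The capacitary minimizer\<close>

lemma admissible_zero: "admissible W f \<Longrightarrow> x \<notin> dyadic_tree \<Longrightarrow> f x = 0"
  unfolding admissible_def by blast

lemma l2_sq_nonneg: "0 \<le> l2_sq f"
  unfolding l2_sq_def by (rule infsum_nonneg) simp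

lemma capacity_le_l2_sq: "admissible W f \<Longrightarrow> capacity W \<le> l2_sq f"
  unfolding capacity_def by (rule cInf_lower) (auto intro!: bdd_belowI[where m = 0] l2_sq_nonneg)

lemma admissible_root_indicator:
  assumes "W \<subseteq> dyadic_tree"
  shows "admissible W (\<lambda>x. if x = root then 1 else 0)"
proof -
  have root: "root \<in> dyadic_tree" by (simp add: root_def dyadic_tree_def)
  have "(\<lambda>x. (if x = root then 1 else 0 :: real)\<^sup>2) summable_on dyadic_tree"
    by (rule summable_on_cong_neutral[where T = "{root}" and g = "\<lambda>_. 1", THEN iffD2]) (auto simp: root)
  moreover have "potential (\<lambda>x. if x = root then 1 else 0) w = 1" if "w \<in> W" for w
  proof -
    have "root \<in> {y \<in> dyadic_tree. tree_le y w}"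
      using that assms root root_tree_le by blast
    then show ?thesis
      unfolding potential_def using finite_ancestors[of w] by (simp add: sum.delta)
  qed
  ultimately show ?thesis
    using root by (auto simp: admissible_def)
qed

lemma capacity_approx:
  assumes "W \<subseteq> dyadic_tree" "0 < e"
  obtains f where "admissible W f" "l2_sq f < capacity W + e"
proof -
  have "{l2_sq f | f. admissible W f} \<noteq> {}"
    using admissible_root_indicator[OF assms(1)] by auto
  moreover have "Inf {l2_sq f | f. admissible W f} < capacity W + e"
    using assms(2) by (simp add: capacity_def)
  ultimately obtain y where "y \<in> {l2_sq f | f. admissible W f}" "y < capacity W + e"
    by (rule cInf_lessD[THEN bexE])
  then show ?thesis
    using that by blast
qed

lemma admissible_midpoint:
  assumes "admissible W f" "admissible W g"
  shows "admissible W (\<lambda>x. (f x + g x) / 2)"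
proof -
  have "1 \<le> potential (\<lambda>x. (f x + g x) / 2) w" if "w \<in> W" for w
  proof -
    have "1 \<le> potential f w" "1 \<le> potential g w"
      using assms that unfolding admissible_def by blast+
    then show ?thesis by (simp add: potential_divide potential_add)
  qed
  moreover have "(\<lambda>x. ((f x + g x) / 2)\<^sup>2) summable_on dyadic_tree"
    using assms unfolding admissible_def by (blast intro: summable_on_square_half_sum(1))
  moreover have "(f x + g x) / 2 = 0" if "x \<notin> dyadic_tree" for x
    using admissible_zero[OF assms(1) that] admissible_zero[OF assms(2) that] by simp
  ultimately show ?thesis
    unfolding admissible_def by blast
qed

lemma admissible_midpoint_dist:
  assumes f: "admissible W f" and g: "admissible W g" and x: "x \<in> dyadic_tree"
  shows "((f x - g x) / 2)\<^sup>2 \<le> (l2_sq f + l2_sq g) / 2 - capacity W"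
proof -
  have sf: "(\<lambda>x. (f x)\<^sup>2) summable_on dyadic_tree" and sg: "(\<lambda>x. (g x)\<^sup>2) summable_on dyadic_tree"
    using f g by (auto simp: admissible_def)
  have "((f x - g x) / 2)\<^sup>2 \<le> infsum (\<lambda>x. ((f x - g x) / 2)\<^sup>2) dyadic_tree"
    using finite_sum_le_infsum[OF summable_on_square_half_sum(2)[OF sf sg], of "{x}"] x by simp
  also have "\<dots> = (l2_sq f + l2_sq g) / 2 - l2_sq (\<lambda>x. (f x + g x) / 2)"
    unfolding l2_sq_def infsum_square_parallelogram[OF sf sg] by simp
  also have "\<dots> \<le> (l2_sq f + l2_sq g) / 2 - capacity W"
    using capacity_le_l2_sq[OF admissible_midpoint[OF f g]] by simp
  finally show ?thesis .
qed

lemma admissible_pointwise_limit: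
  assumes f: "\<And>n. admissible W (f n)"
    and lim: "\<And>x. x \<in> dyadic_tree \<Longrightarrow> (\<lambda>n. f n x) \<longlonglongrightarrow> g x"
    and zero: "\<And>x. x \<notin> dyadic_tree \<Longrightarrow> g x = 0"
    and bound: "\<And>n. l2_sq (f n) \<le> b n" and b: "b \<longlonglongrightarrow> c"
  shows "admissible W g" and "l2_sq g \<le> c"
proof -
  have sq: "\<And>n. (\<lambda>x. (f n x)\<^sup>2) summable_on dyadic_tree"
    using f by (auto simp: admissible_def)
  note limit = infsum_square_le_pointwise_limit[OF sq lim _ b]
  have "1 \<le> potential g w" if "w \<in> W" for w
  proof (rule LIMSEQ_le_const)
    show "(\<lambda>n. potential (f n) w) \<longlonglongrightarrow> potential g w"
      unfolding potential_def by (auto intro!: tendsto_sum lim)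
    show "\<exists>N. \<forall>n\<ge>N. 1 \<le> potential (f n) w"
      using f that by (auto simp: admissible_def)
  qed
  then show "admissible W g"
    using limit(1) bound zero by (auto simp: admissible_def l2_sq_def)
  show "l2_sq g \<le> c"
    using limit(2) bound by (simp add: l2_sq_def)
qed

lemma minimizing_sequence_Cauchy:
  assumes f: "\<And>n. admissible W (f n)" "\<And>n. l2_sq (f n) \<le> capacity W + 1 / Suc n"
    and x: "x \<in> dyadic_tree"
  shows "Cauchy (\<lambda>n. f n x)"
proof (rule CauchyI)
  fix e :: real assume "0 < e"
  obtain M :: nat where "4 / e\<^sup>2 < M"
    using reals_Archimedean2 by blast
  then have "4 / e\<^sup>2 < Suc M"
    by simp
  then have "4 / Suc M < e\<^sup>2"
    using \<open>0 < e\<close> by (simp add: field_simps)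
  have "\<bar>f m x - f n x\<bar> < e" if "M \<le> m" "M \<le> n" for m n
  proof -
    have "((f m x - f n x) / 2)\<^sup>2 \<le> (l2_sq (f m) + l2_sq (f n)) / 2 - capacity W"
      using admissible_midpoint_dist[OF f(1) f(1) x] .
    also have "\<dots> \<le> (1 / Suc m + 1 / Suc n) / 2"
      using f(2)[of m] f(2)[of n] by argo
    also have "\<dots> \<le> 1 / Suc M"
    proof -
      have "1 / Suc m \<le> 1 / Suc M" "1 / Suc n \<le> 1 / Suc M"
        using that by (auto intro!: divide_left_mono)
      then show ?thesis by argo
    qed
    finally have "((f m x - f n x) / 2)\<^sup>2 \<le> 1 / Suc M" .
    then have "(f m x - f n x)\<^sup>2 \<le> 4 / Suc M"
      by (simp add: power_divide)
    then have "(f m x - f n x)\<^sup>2 < e\<^sup>2"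
      using \<open>4 / Suc M < e\<^sup>2\<close> by linarith
    then show ?thesis
      using \<open>0 < e\<close> power2_less_imp_less[of "\<bar>f m x - f n x\<bar>" e] by simp
  qed
  then show "\<exists>M. \<forall>m\<ge>M. \<forall>n\<ge>M. norm (f m x - f n x) < e"
    by auto
qed

lemma capacity_minimizer_exists:
  assumes W: "W \<subseteq> dyadic_tree"
  obtains h where "admissible W h" "l2_sq h = capacity W"
proof -
  have "\<forall>n. \<exists>f. admissible W f \<and> l2_sq f < capacity W + 1 / Suc n"
    using capacity_approx[OF W] by (metis of_nat_0_less_iff zero_less_Suc zero_less_divide_1_iff)
  then obtain f where f: "\<And>n. admissible W (f n)" "\<And>n. l2_sq (f n) \<le> capacity W + 1 / Suc n"
    by (metis less_imp_le)
  define g where "g x = (if x \<in> dyadic_tree then lim (\<lambda>n. f n x) else 0)" for x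
  have lim: "(\<lambda>n. f n x) \<longlonglongrightarrow> g x" if "x \<in> dyadic_tree" for x
    using minimizing_sequence_Cauchy[OF f that] that
    by (simp add: g_def Cauchy_convergent_iff convergent_LIMSEQ_iff)
  have zero: "g x = 0" if "x \<notin> dyadic_tree" for x
    using that by (simp add: g_def)
  have "(\<lambda>n. capacity W + 1 / Suc n) \<longlonglongrightarrow> capacity W"
    using tendsto_add[OF tendsto_const LIMSEQ_Suc[OF lim_const_over_n[of 1]]] by simp
  note g = admissible_pointwise_limit[OF f(1) lim zero f(2) this]
  show thesis
    using that[OF g(1)] g(2) capacity_le_l2_sq[OF g(1)] by linarith
qed

lemma capacity_minimizer_unique:
  assumes h1: "admissible W h1" "l2_sq h1 = capacity W"
    and h2: "admissible W h2" "l2_sq h2 = capacity W"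
  shows "h1 = h2"
proof
  fix x
  show "h1 x = h2 x"
  proof (cases "x \<in> dyadic_tree")
    case True
    then have "((h1 x - h2 x) / 2)\<^sup>2 \<le> 0"
      using admissible_midpoint_dist[OF h1(1) h2(1)] h1(2) h2(2) by simp
    then show ?thesis by simp
  next
    case False
    then show ?thesis using admissible_zero h1(1) h2(1) by metis
  qed
qed

lemma cap_minimizer:
  assumes "W \<subseteq> dyadic_tree"
  shows "admissible W (cap_minimizer W)" and "l2_sq (cap_minimizer W) = capacity W"
proof -
  have "\<exists>!h. admissible W h \<and> l2_sq h = capacity W"
    using capacity_minimizer_exists[OF assms] capacity_minimizer_unique by metis
  then have "admissible W (cap_minimizer W) \<and> l2_sq (cap_minimizer W) = capacity W"
    unfolding cap_minimizer_def by (rule theI')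
  then show "admissible W (cap_minimizer W)" "l2_sq (cap_minimizer W) = capacity W"
    by auto
qed

lemma cap_minimizer_nonneg:
  assumes W: "W \<subseteq> dyadic_tree"
  shows "0 \<le> cap_minimizer W x"
proof -
  let ?h = "cap_minimizer W"
  have "potential ?h w \<le> potential (\<lambda>x. \<bar>?h x\<bar>) w" for w
    unfolding potential_def by (rule sum_mono) simp
  then have "admissible W (\<lambda>x. \<bar>?h x\<bar>)"
    using cap_minimizer(1)[OF W] unfolding admissible_def by (auto intro: order_trans)
  moreover have "l2_sq (\<lambda>x. \<bar>?h x\<bar>) = capacity W"
    using cap_minimizer(2)[OF W] by (simp add: l2_sq_def)
  ultimately have "(\<lambda>x. \<bar>?h x\<bar>) = ?h"
    using capacity_minimizer_unique cap_minimizer[OF W] by blast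
  then show ?thesis
    by (metis abs_ge_zero)
qed

lemma cap_minimizer_variational:
  assumes W: "W \<subseteq> dyadic_tree" and S: "finite S" "S \<subseteq> dyadic_tree"
    and e: "\<And>x. x \<notin> S \<Longrightarrow> e x = 0" and pot: "\<And>w. w \<in> W \<Longrightarrow> 0 \<le> potential e w"
  shows "0 \<le> (\<Sum>x\<in>S. cap_minimizer W x * e x)"
proof -
  let ?h = "cap_minimizer W"
  have h: "admissible W ?h" "l2_sq ?h = capacity W"
    using cap_minimizer[OF W] by auto
  have hsq: "(\<lambda>x. (?h x)\<^sup>2) summable_on dyadic_tree"
    using h(1) by (simp add: admissible_def)
  have "0 \<le> d * (2 * (\<Sum>x\<in>S. ?h x * e x)) + d\<^sup>2 * (\<Sum>x\<in>S. (e x)\<^sup>2)" if "0 < d" for d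
  proof -
    have de: "\<And>x. x \<notin> S \<Longrightarrow> d * e x = 0"
      using e by simp
    note perturbed = infsum_square_add_finite_support[OF hsq S, where e = "\<lambda>x. d * e x", OF de]
    have "admissible W (\<lambda>x. ?h x + d * e x)"
    proof -
      have "1 \<le> potential (\<lambda>x. ?h x + d * e x) w" if "w \<in> W" for w
      proof -
        have "1 \<le> potential ?h w"
          using h(1) that unfolding admissible_def by blast
        moreover have "0 \<le> d * potential e w"
          using pot[OF that] \<open>0 < d\<close> by simp
        ultimately show ?thesis
          by (simp add: potential_add potential_cmult)
      qed
      moreover have "?h x + d * e x = 0" if "x \<notin> dyadic_tree" for x
      proof -
        have "x \<notin> S" using that S(2) by blast
        then show ?thesis using admissible_zero[OF h(1) that] e by simp
      qed
      ultimately show ?thesis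
        using perturbed(1) unfolding admissible_def by blast
    qed
    then have "capacity W \<le> l2_sq (\<lambda>x. ?h x + d * e x)"
      by (rule capacity_le_l2_sq)
    also have "\<dots> = capacity W + (\<Sum>x\<in>S. 2 * ?h x * (d * e x) + (d * e x)\<^sup>2)"
      using perturbed(2) h(2) by (simp add: l2_sq_def)
    also have "\<dots> = capacity W + (d * (2 * (\<Sum>x\<in>S. ?h x * e x)) + d\<^sup>2 * (\<Sum>x\<in>S. (e x)\<^sup>2))"
      by (simp add: sum.distrib sum_distrib_left power_mult_distrib mult_ac)
    finally show ?thesis by simp
  qed
  then have "0 \<le> 2 * (\<Sum>x\<in>S. ?h x * e x)"
    by (rule nonneg_if_quadratic_nonneg)
  then show ?thesis by simp
qed

lemma cap_minimizer_children_le: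
  assumes W: "W \<subseteq> dyadic_tree" and p: "p \<in> dyadic_tree"
  defines "c0 \<equiv> (Suc (fst p), 2 * snd p)" and "c1 \<equiv> (Suc (fst p), 2 * snd p + 1)"
  shows "cap_minimizer W c0 + cap_minimizer W c1 \<le> cap_minimizer W p"
proof -
  have children: "c0 \<in> dyadic_tree" "c1 \<in> dyadic_tree" "tree_le p c0" "tree_le p c1"
    using p by (cases p; auto simp: c0_def c1_def dyadic_tree_def tree_le_def)+
  have distinct: "p \<noteq> c0" "p \<noteq> c1" "c0 \<noteq> c1"
    by (cases p; simp add: c0_def c1_def)+
  \<comment> \<open>Moving mass from both children to the parent never lowers a potential on W.\<close>
  define e where "e x = (if x = p then 1 else 0) - (if x = c0 then 1 else 0) - (if x = c1 then 1 else (0::real))" for x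
  have pot: "0 \<le> potential e w" if "w \<in> W" for w
  proof -
    let ?A = "{y \<in> dyadic_tree. tree_le y w}"
    have "potential e w = (if p \<in> ?A then 1 else 0) - (if c0 \<in> ?A then 1 else 0) - (if c1 \<in> ?A then 1 else 0)"
      unfolding potential_def e_def using finite_ancestors[of w] by (simp add: sum_subtractf sum.delta)
    moreover have "c0 \<in> ?A \<Longrightarrow> p \<in> ?A" "c1 \<in> ?A \<Longrightarrow> p \<in> ?A"
      using children p tree_le_trans by blast+
    moreover have "\<not> (c0 \<in> ?A \<and> c1 \<in> ?A)"
      using tree_le_same_level[of c0 w c1] distinct(3) by (auto simp: c0_def c1_def)
    ultimately show ?thesis by auto
  qed
  have "0 \<le> (\<Sum>x\<in>{p, c0, c1}. cap_minimizer W x * e x)"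
    by (rule cap_minimizer_variational[OF W _ _ _ pot]) (use p children in \<open>auto simp: e_def\<close>)
  then show ?thesis
    using distinct by (simp add: e_def)
qed

lemma cap_minimizer_le_parent:
  assumes W: "W \<subseteq> dyadic_tree" and x: "x \<in> dyadic_tree" "fst x = Suc n"
  shows "cap_minimizer W x \<le> cap_minimizer W (ancestor x n)"
proof -
  let ?p = "ancestor x n"
  have p: "?p \<in> dyadic_tree" "?p = (n, snd x div 2)"
    using ancestor_in_tree[OF x(1), of n] x(2) by (simp_all add: ancestor_def)
  have "x = (Suc (fst ?p), 2 * snd ?p) \<or> x = (Suc (fst ?p), 2 * snd ?p + 1)"
    using p(2) x(2) by (cases x) auto
  then show ?thesis
    using cap_minimizer_children_le[OF W p(1)] cap_minimizer_nonneg[OF W] by (smt (verit))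
qed

lemma cap_minimizer_antitone_ancestor:
  assumes W: "W \<subseteq> dyadic_tree" and x: "x \<in> dyadic_tree" and "a \<le> b" "b \<le> fst x"
  shows "cap_minimizer W (ancestor x b) \<le> cap_minimizer W (ancestor x a)"
  using \<open>a \<le> b\<close> \<open>b \<le> fst x\<close>
proof (induction b rule: dec_induct)
  case (step m)
  have "cap_minimizer W (ancestor x (Suc m)) \<le> cap_minimizer W (ancestor (ancestor x (Suc m)) m)"
    using step.prems x by (intro cap_minimizer_le_parent[OF W] ancestor_in_tree) auto
  also have "\<dots> = cap_minimizer W (ancestor x m)"
    using step.prems by (simp add: ancestor_ancestor)
  finally show ?case
    using step by simp
qed simp

section \<open>Blowups\<close>

lemma potential_Rrho_ge:
  assumes W: "W \<subseteq> dyadic_tree" and \<kappa>: "\<kappa> \<in> W" and \<rho>: "0 < \<rho>" "\<rho> \<le> 1"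
  shows "\<rho> \<le> potential (cap_minimizer W) (Rrho \<rho> \<kappa>)"
proof -
  let ?h = "cap_minimizer W" and ?n = "fst \<kappa>"
  define k where "k = nat \<lceil>\<rho> * real (fst \<kappa> + 1)\<rceil> - 1"
  have \<kappa>_tree: "\<kappa> \<in> dyadic_tree" using W \<kappa> by blast
  note R = Rrho_eq_ancestor[OF \<kappa>_tree \<rho>, folded k_def]
  define s where "s m = ?h (ancestor \<kappa> m)" for m
  have "1 \<le> (\<Sum>m\<le>?n. s m)"
    using cap_minimizer(1)[OF W] \<kappa> \<kappa>_tree
    by (auto simp: admissible_def s_def potential_eq_sum_ancestors)
  then have "real (k + 1) \<le> real (k + 1) * (\<Sum>m\<le>?n. s m)"
    using mult_left_mono[of 1 "\<Sum>m\<le>?n. s m" "real (k + 1)"] by simp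
  then have "\<rho> * real (?n + 1) \<le> real (k + 1) * (\<Sum>m\<le>?n. s m)"
    using R(3) by linarith
  also have "\<dots> \<le> real (?n + 1) * (\<Sum>m\<le>k. s m)"
    using cap_minimizer_antitone_ancestor[OF W \<kappa>_tree] R(2)
    by (intro antitone_prefix_mean_ge) (auto simp: s_def)
  finally have "\<rho> * real (?n + 1) \<le> real (?n + 1) * (\<Sum>m\<le>k. s m)" .
  then have "\<rho> \<le> (\<Sum>m\<le>k. s m)"
    by (simp add: mult.commute)
  then show ?thesis
    using R(1,2) \<kappa>_tree by (simp add: potential_ancestor s_def)
qed

lemma Rrho_in_geodesic_union:
  assumes W: "W \<subseteq> dyadic_tree" and \<kappa>: "\<kappa> \<in> W" and \<rho>: "0 < \<rho>" "\<rho> \<le> 1"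
  shows "Rrho \<rho> \<kappa> \<in> geodesic_union W"
proof -
  have \<kappa>_tree: "\<kappa> \<in> dyadic_tree" using W \<kappa> by blast
  note R = Rrho_eq_ancestor[OF \<kappa>_tree \<rho>]
  show ?thesis
    unfolding geodesic_union_def R(1)
    using \<kappa> \<kappa>_tree R(2) by (blast intro: ancestor_in_tree tree_le_ancestor)
qed

lemma cap_blowup_covers:
  assumes y: "y \<in> geodesic_union W" and H: "\<rho> \<le> potential (cap_minimizer W) y"
  shows "\<exists>t\<in>cap_blowup \<rho> W. tree_le t y"
proof -
  let ?H = "potential (cap_minimizer W)"
  obtain w where "y \<in> dyadic_tree" "w \<in> W" "tree_le y w"
    using y by (auto simp: geodesic_union_def)
  define m where "m = (LEAST m. \<rho> \<le> ?H (ancestor y m))"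
  define t where "t = ancestor y m"
  have "\<rho> \<le> ?H (ancestor y (fst y))"
    using H by simp
  then have "\<rho> \<le> ?H t" "m \<le> fst y"
    unfolding t_def m_def by (rule LeastI, rule Least_le)
  then have "tree_le t y" "t \<in> dyadic_tree"
    using \<open>y \<in> dyadic_tree\<close> by (simp_all add: t_def tree_le_ancestor ancestor_in_tree)
  moreover have "?H x \<le> \<rho>" if "tree_less x t" for x
  proof -
    have "fst x \<le> m" "x = ancestor t (fst x)" "x \<noteq> t"
      using that by (auto simp: tree_less_def tree_le_iff_ancestor t_def)
    then have "fst x < m" "x = ancestor y (fst x)"
      using \<open>m \<le> fst y\<close> ancestor_ancestor[of "fst x" m y] by (auto simp: t_def le_less)
    then show ?thesis
      using not_less_Least[of "fst x"] unfolding m_def by fastforce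
  qed
  ultimately have "t \<in> cap_blowup \<rho> W"
    using \<open>\<rho> \<le> ?H t\<close> \<open>w \<in> W\<close> tree_le_trans[OF \<open>tree_le t y\<close> \<open>tree_le y w\<close>]
    by (auto simp: cap_blowup_def geodesic_union_def Let_def)
  then show ?thesis
    using \<open>tree_le t y\<close> by blast
qed

lemma capacity_le_of_potential_ge:
  assumes f: "admissible W f" and \<rho>: "0 < \<rho>" and V: "\<And>y. y \<in> V \<Longrightarrow> \<rho> \<le> potential f y"
  shows "capacity V \<le> l2_sq f / \<rho>\<^sup>2"
proof -
  have fsq: "(\<lambda>x. (f x)\<^sup>2) summable_on dyadic_tree"
    using f by (simp add: admissible_def)
  have sq: "(\<lambda>x. (f x / \<rho>)\<^sup>2) = (\<lambda>x. (f x)\<^sup>2 * (1 / \<rho>\<^sup>2))"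
    by (simp add: power_divide)
  have "(\<lambda>x. (f x / \<rho>)\<^sup>2) summable_on dyadic_tree"
    unfolding sq by (rule summable_on_cmult_left[OF fsq])
  then have "admissible V (\<lambda>x. f x / \<rho>)"
    using f V \<rho>
    by (auto simp: admissible_def potential_divide sq)
  then have "capacity V \<le> l2_sq (\<lambda>x. f x / \<rho>)"
    by (rule capacity_le_l2_sq)
  also have "\<dots> = l2_sq f * (1 / \<rho>\<^sup>2)"
    unfolding l2_sq_def sq by (rule infsum_cmult_left[OF fsq])
  finally show ?thesis by simp
qed

theorem mainTheorem5:
  fixes W :: "vertex set" and \<rho> :: real
  assumes "stopping_time W" and "0 < \<rho>" and "\<rho> < 1"
  shows "shadow (blowup \<rho> W) \<subseteq> shadow (cap_blowup \<rho> W)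
         \<and> capacity (blowup \<rho> W) \<le> capacity W / \<rho>\<^sup>2"
proof -
  have W: "W \<subseteq> dyadic_tree"
    using assms(1) by (simp add: stopping_time_def)
  have blowup: "y \<in> geodesic_union W" "\<rho> \<le> potential (cap_minimizer W) y"
    if "y \<in> blowup \<rho> W" for y
  proof -
    have "y \<in> Rrho \<rho> ` W"
      using that by (simp add: blowup_def minimal_elements_def)
    then obtain \<kappa> where "\<kappa> \<in> W" "y = Rrho \<rho> \<kappa>"
      by blast
    then show "y \<in> geodesic_union W" "\<rho> \<le> potential (cap_minimizer W) y"
      using Rrho_in_geodesic_union[OF W] potential_Rrho_ge[OF W] assms(2,3) by auto
  qed
  have "shadow (blowup \<rho> W) \<subseteq> shadow (cap_blowup \<rho> W)"
    using blowup cap_blowup_covers shadow_mono_tree_le by meson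
  moreover have "capacity (blowup \<rho> W) \<le> capacity W / \<rho>\<^sup>2"
    using capacity_le_of_potential_ge[OF cap_minimizer(1)[OF W] assms(2) blowup(2)]
    by (simp add: cap_minimizer(2)[OF W])
  ultimately show ?thesis ..
qed

end
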